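(* Let $Q$ be any golden rectangle inscribed in the unit circle (i.e. with all four vertices on $\partial\mathbb{D}$). Then there is at least one ellipse $E$ inscribed in $Q$ such that $E$ is the Poncelet curve of a finite Blaschke product $B$ of degree $4$ with $B(0)=0$.
   Context: $\mathbb{D}$ is the open unit disc, $\partial\mathbb{D}$ the unit circle, and $\alpha=\frac{1+\sqrt5}{2}$. A golden rectangle is a rectangle whose longer side length divided by its shorter side length equals $\alpha$. A finite Blaschke product of degree $n$ is $B(z)=\beta\prod_{i=1}^n\frac{z-a_i}{1-\overline{a_i}z}$ with $|\beta|=1$, $|a_i|<1$. For such $B$ with $B(0)=0$ and each $\lambda\in\partial\mathbb{D}$, there are $n$ distinct points $z_1,\dots,z_n\in\partial\mathbb{D}$ with $B(z_j)=\lambda$; the Poncelet curve associated with $B$ is the (unique) curve in $\mathbb{D}$ which, for every $\lambda\in\partial\mathbb{D}$, is inscribed in (tangent to every side of) the polygon whose vertices are these $n$ points taken in order of argument, i.e. the envelope of the lines joining consecutive points of $B^{-1}(\lambda)$. *)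

theory Defs
  imports "HOL-Analysis.Analysis"
begin

definition golden_ratio :: real where
  "golden_ratio = (1 + sqrt 5) / 2"

definition blaschke_product :: "nat \<Rightarrow> (complex \<Rightarrow> complex) \<Rightarrow> bool" where
  "blaschke_product n B \<longleftrightarrow>
     (\<exists>\<beta> (a :: nat \<Rightarrow> complex). cmod \<beta> = 1 \<and> (\<forall>i<n. cmod (a i) < 1) \<and>
        B = (\<lambda>z. \<beta> * (\<Prod>i<n. (z - a i) / (1 - cnj (a i) * z))))"

definition is_ellipse :: "complex set \<Rightarrow> bool" where
  "is_ellipse E \<longleftrightarrow>
     (\<exists>f1 f2 r. dist f1 f2 < 2 * r \<and> E = {z. dist z f1 + dist z f2 = 2 * r})"

definition is_rectangle :: "complex \<Rightarrow> complex \<Rightarrow> complex \<Rightarrow> complex \<Rightarrow> bool" where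
  "is_rectangle a b c d \<longleftrightarrow>
     a \<noteq> b \<and> b \<noteq> c \<and> b - a = c - d \<and> Re ((b - a) * cnj (c - b)) = 0"

definition golden_rectangle :: "complex \<Rightarrow> complex \<Rightarrow> complex \<Rightarrow> complex \<Rightarrow> bool" where
  "golden_rectangle a b c d \<longleftrightarrow> is_rectangle a b c d \<and>
     max (cmod (b - a)) (cmod (c - b)) / min (cmod (b - a)) (cmod (c - b)) = golden_ratio"

text \<open>A curve E inscribed in a convex polygon: contained in the polygon (convex hull of
  its vertices) and touching every side (for a convex curve inside the polygon this is
  tangency).\<close>
definition inscribed_in_polygon :: "complex set \<Rightarrow> complex set \<Rightarrow> (complex \<times> complex) set \<Rightarrow> bool" where
  "inscribed_in_polygon E V sides \<longleftrightarrow>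
     E \<subseteq> convex hull V \<and> (\<forall>(p, q) \<in> sides. E \<inter> closed_segment p q \<noteq> {})"

definition consecutive_on_circle :: "complex set \<Rightarrow> complex \<Rightarrow> complex \<Rightarrow> bool" where
  "consecutive_on_circle S z w \<longleftrightarrow> z \<in> S \<and> w \<in> S \<and> z \<noteq> w \<and>
     (\<exists>t. 0 < t \<and> t < 2 * pi \<and> w = z * cis t \<and>
        (\<forall>u. 0 < u \<and> u < t \<longrightarrow> z * cis u \<notin> S))"

definition poncelet_curve :: "(complex \<Rightarrow> complex) \<Rightarrow> complex set \<Rightarrow> bool" where
  "poncelet_curve B E \<longleftrightarrow>
     (\<forall>l. cmod l = 1 \<longrightarrow>
        (let S = {z. cmod z = 1 \<and> B z = l} in
         inscribed_in_polygon E S {(z, w). consecutive_on_circle S z w}))"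

end

theory Submission
  imports Defs
begin

(* Let the rectangle have vertices +-a, +-b on the unit circle, put q = (a^2 + b^2)/2 and
   B(z) = z^2 (z^2 - q) / (1 - conj q z^2), a degree-two Blaschke product composed with z^2.
   For |l| = 1 the equation B(z) = l is a quadratic in w = z^2 whose roots w1, w2 are distinct,
   lie on the unit circle and satisfy w1 + w2 = q + conj q w1 w2.  Hence every level set of B on
   the circle is again a rectangle {+-s1, +-s2} with s1^2 + s2^2 = q + conj q s1^2 s2^2, a relation
   the given rectangle satisfies as well.  The ellipse with foci +-sqrt q and major semi-axis
   R = sqrt ((1 + |q|)/2) has support function h with h(n)^2 = (R^2 - |q|) |n|^2 + (sqrt q . n)^2,
   and this relation says exactly that h(n) = |n|^2 for n = (s1 +- s2)/2, the feet of the
   perpendiculars from 0 to the sides: the ellipse is tangent to all four sides. *)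

definition focal_ellipse :: "'a::real_normed_vector \<Rightarrow> real \<Rightarrow> 'a set" where
  "focal_ellipse r R = {z. dist z r + dist z (-r) = 2 * R}"

lemma is_ellipse_focal_ellipse: "cmod r < R \<Longrightarrow> is_ellipse (focal_ellipse r R)"
  unfolding is_ellipse_def focal_ellipse_def
  by (intro exI[of _ r] exI[of _ "-r"] exI[of _ R]) (simp add: dist_norm)

lemma inner_self_less_square: "norm x < R \<Longrightarrow> x \<bullet> x < R\<^sup>2"
  by (metis norm_ge_zero power2_norm_eq_inner power_strict_mono zero_less_numeral)

lemma focal_ellipse_iff:
  fixes r z :: "'a::real_inner"
  assumes "norm r < R"
  shows "z \<in> focal_ellipse r R \<longleftrightarrow> R\<^sup>2 * (z \<bullet> z) - (z \<bullet> r)\<^sup>2 = R\<^sup>2 * (R\<^sup>2 - r \<bullet> r)"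
    (is "_ \<longleftrightarrow> ?eq")
proof -
  have R: "R > 0" using assms norm_ge_zero[of r] by linarith
  have rr: "r \<bullet> r < R\<^sup>2" using assms by (rule inner_self_less_square)
  define p where "p = z \<bullet> r"
  define d1 where "d1 = norm (z - r)"
  define d2 where "d2 = norm (z + r)"
  have d1_sq: "d1\<^sup>2 = z \<bullet> z - 2 * p + r \<bullet> r" unfolding d1_def p_def power2_norm_eq_inner
    by (simp add: inner_diff_left inner_diff_right inner_commute)
  have d2_sq: "d2\<^sup>2 = d1\<^sup>2 + 4 * p" unfolding d2_def d1_sq p_def power2_norm_eq_inner
    by (simp add: inner_add_left inner_add_right inner_commute)
  have eq_iff: "?eq \<longleftrightarrow> d1\<^sup>2 = (R - p / R)\<^sup>2"
    using R unfolding d1_sq p_def by (auto simp: field_simps power2_eq_square)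
  have "d1 + d2 = 2 * R \<longleftrightarrow> ?eq"
  proof
    assume sum: "d1 + d2 = 2 * R"
    have "(d2 - d1) * (d1 + d2) = 4 * p"
      using d2_sq by (simp add: power2_eq_square algebra_simps)
    moreover have "d2 - d1 = 2 * (R - d1)" using sum by simp
    ultimately have "(R - d1) * R = p" by (simp add: sum algebra_simps)
    then have "d1 = R - p / R" using R by (simp add: field_simps)
    then show ?eq using eq_iff by simp
  next
    assume ?eq
    have "p\<^sup>2 \<le> (z \<bullet> z) * (r \<bullet> r)" unfolding p_def by (metis Cauchy_Schwarz_ineq)
    then have "R\<^sup>2 * p\<^sup>2 \<le> (R\<^sup>2 * (z \<bullet> z)) * (r \<bullet> r)"
      by (simp add: mult_left_mono mult.assoc)
    also have "R\<^sup>2 * (z \<bullet> z) = p\<^sup>2 + R\<^sup>2 * (R\<^sup>2 - r \<bullet> r)"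
      using \<open>?eq\<close> by (simp add: p_def)
    finally have "p\<^sup>2 * (R\<^sup>2 - r \<bullet> r) \<le> (R\<^sup>2 * (r \<bullet> r)) * (R\<^sup>2 - r \<bullet> r)"
      by (simp add: algebra_simps)
    then have "p\<^sup>2 \<le> R\<^sup>2 * (r \<bullet> r)" using rr by (simp add: mult_le_cancel_right)
    also have "\<dots> < R\<^sup>2 * R\<^sup>2" using rr R by (intro mult_strict_left_mono) auto
    finally have "\<bar>p\<bar>\<^sup>2 < (R\<^sup>2)\<^sup>2" by (simp only: power2_abs power2_eq_square[of "R\<^sup>2"])
    then have "\<bar>p\<bar> < R\<^sup>2" by (rule power2_less_imp_less) simp
    then have pos: "R - p / R > 0" "R + p / R > 0"
      using R by (auto simp: field_simps power2_eq_square abs_less_iff)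
    have "d1 = R - p / R" using \<open>?eq\<close> eq_iff pos(1) d1_def
      by (metis norm_ge_zero power2_eq_iff_nonneg less_imp_le)
    moreover have "d2\<^sup>2 = (R + p / R)\<^sup>2" using d2_sq \<open>?eq\<close> eq_iff R
      by (simp add: power2_eq_square field_simps)
    then have "d2 = R + p / R" using pos(2) d2_def
      by (metis norm_ge_zero power2_eq_iff_nonneg less_imp_le)
    ultimately show "d1 + d2 = 2 * R" by simp
  qed
  then show ?thesis unfolding focal_ellipse_def d1_def d2_def by (simp add: dist_norm)
qed

lemma focal_ellipse_support_le:
  fixes r z n :: "'a::real_inner"
  assumes "norm r < R" and "z \<in> focal_ellipse r R"
  shows "(z \<bullet> n)\<^sup>2 \<le> (R\<^sup>2 - r \<bullet> r) * (n \<bullet> n) + (r \<bullet> n)\<^sup>2"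
proof -
  define b2 where "b2 = R\<^sup>2 - r \<bullet> r"
  define K where "K = b2 * (n \<bullet> n) + (r \<bullet> n)\<^sup>2"
  have rr: "r \<bullet> r < R\<^sup>2" using assms(1) by (rule inner_self_less_square)
  then have b2: "b2 > 0" by (simp add: b2_def)
  have "R > 0" using assms(1) norm_ge_zero[of r] by linarith
  then have R: "R\<^sup>2 > 0" by simp
  have on_E: "R\<^sup>2 * (z \<bullet> z) - (z \<bullet> r)\<^sup>2 = R\<^sup>2 * b2"
    using assms focal_ellipse_iff by (auto simp: b2_def)
  show ?thesis
  proof (cases "n = 0")
    case False
    then have K: "K > 0" using b2 by (simp add: K_def add_pos_nonneg)
    (* Cauchy-Schwarz for the form Q x = R^2 |x|^2 - (x . r)^2: the vector w subtracted below has
       polar form Q(w, y) = R^2 b2 (y . n), and Q (z - t w) >= 0 at the optimal t. *)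
    define t where "t = (z \<bullet> n) / K"
    define x where "x = z - t *\<^sub>R (b2 *\<^sub>R n + (r \<bullet> n) *\<^sub>R r)"
    have "(x \<bullet> r)\<^sup>2 \<le> (x \<bullet> x) * (r \<bullet> r)" by (metis Cauchy_Schwarz_ineq)
    also have "\<dots> \<le> (x \<bullet> x) * R\<^sup>2" using rr by (intro mult_left_mono) auto
    finally have "0 \<le> R\<^sup>2 * (x \<bullet> x) - (x \<bullet> r)\<^sup>2" by (simp add: mult.commute)
    also have "R\<^sup>2 * (x \<bullet> x) - (x \<bullet> r)\<^sup>2 = R\<^sup>2 * b2 * (1 - (z \<bullet> n)\<^sup>2 / K)"
    proof -
      have "R\<^sup>2 * (x \<bullet> x) - (x \<bullet> r)\<^sup>2 =
        R\<^sup>2 * (z \<bullet> z) - (z \<bullet> r)\<^sup>2 - 2 * t * R\<^sup>2 * b2 * (z \<bullet> n) + t\<^sup>2 * R\<^sup>2 * b2 * K"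
        unfolding x_def K_def b2_def
        by (simp add: inner_diff_left inner_diff_right inner_add_left inner_add_right
            inner_commute power2_eq_square algebra_simps)
      also have "\<dots> = R\<^sup>2 * b2 * (1 - (z \<bullet> n)\<^sup>2 / K)"
        unfolding on_E t_def using K by (simp add: field_simps power2_eq_square)
      finally show ?thesis .
    qed
    finally have "0 \<le> (R\<^sup>2 * b2) * (1 - (z \<bullet> n)\<^sup>2 / K)" .
    then have "(z \<bullet> n)\<^sup>2 / K \<le> 1"
      using mult_pos_pos[OF R b2] by (simp add: zero_le_mult_iff)
    then show ?thesis using K by (simp add: K_def b2_def)
  qed simp
qed

lemma focal_ellipse_touches_line:
  fixes r n :: "'a::real_inner"
  assumes "norm r < R" and "n \<noteq> 0"
    and tangent: "(R\<^sup>2 - r \<bullet> r) * (n \<bullet> n) + (r \<bullet> n)\<^sup>2 = (n \<bullet> n)\<^sup>2"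
  obtains z where "z \<in> focal_ellipse r R" and "z \<bullet> n = n \<bullet> n"
proof
  define b2 where "b2 = R\<^sup>2 - r \<bullet> r"
  define z where "z = (1 / (n \<bullet> n)) *\<^sub>R (b2 *\<^sub>R n + (r \<bullet> n) *\<^sub>R r)"
  have nn: "n \<bullet> n > 0" using assms(2) by simp
  have tangent': "b2 * (n \<bullet> n) + (r \<bullet> n)\<^sup>2 = (n \<bullet> n)\<^sup>2" using tangent by (simp add: b2_def)
  show "z \<bullet> n = n \<bullet> n"
    using nn tangent' by (simp add: z_def inner_add_left power2_eq_square field_simps)
  have zr: "(n \<bullet> n) * (z \<bullet> r) = (r \<bullet> n) * (b2 + r \<bullet> r)"
    using nn by (simp add: z_def inner_add_left inner_commute algebra_simps)
  have zz: "(n \<bullet> n)\<^sup>2 * (z \<bullet> z) = b2\<^sup>2 * (n \<bullet> n) + 2 * b2 * (r \<bullet> n)\<^sup>2 + (r \<bullet> n)\<^sup>2 * (r \<bullet> r)"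
    using nn by (simp add: z_def inner_add_left inner_add_right inner_commute power2_eq_square
        field_simps)
  have "(n \<bullet> n)\<^sup>2 * (R\<^sup>2 * (z \<bullet> z) - (z \<bullet> r)\<^sup>2) = (n \<bullet> n)\<^sup>2 * (R\<^sup>2 * b2)"
  proof -
    have R2: "R\<^sup>2 = b2 + r \<bullet> r" by (simp add: b2_def)
    show ?thesis unfolding R2 using zr zz tangent' by algebra
  qed
  then have "R\<^sup>2 * (z \<bullet> z) - (z \<bullet> r)\<^sup>2 = R\<^sup>2 * b2" using nn by simp
  then show "z \<in> focal_ellipse r R" by (simp add: b2_def focal_ellipse_iff[OF assms(1)])
qed

lemma add_scaleR_mem_closed_segment:
  fixes a f :: "'a::real_vector"
  assumes "\<bar>\<beta>\<bar> \<le> 1"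
  shows "a + \<beta> *\<^sub>R f \<in> closed_segment (a + f) (a - f)"
proof -
  have "a + \<beta> *\<^sub>R f = (1 - (1 - \<beta>) / 2) *\<^sub>R (a + f) + ((1 - \<beta>) / 2) *\<^sub>R (a - f)"
    by (simp add: algebra_simps flip: scaleR_add_left)
  moreover have "0 \<le> (1 - \<beta>) / 2" "(1 - \<beta>) / 2 \<le> 1" using assms by auto
  ultimately show ?thesis unfolding closed_segment_def by blast
qed

lemma scaleR_add_mem_convex_hull_rectangle:
  fixes e f :: "'a::real_vector"
  assumes "\<bar>\<alpha>\<bar> \<le> 1" and "\<bar>\<beta>\<bar> \<le> 1"
  shows "\<alpha> *\<^sub>R e + \<beta> *\<^sub>R f \<in> convex hull {e + f, e - f, -(e + f), -(e - f)}"
proof -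
  let ?H = "convex hull {e + f, e - f, -(e + f), -(e - f)}"
  have "e + \<beta> *\<^sub>R f \<in> closed_segment (e + f) (e - f)"
    using assms(2) by (rule add_scaleR_mem_closed_segment)
  also have "\<dots> \<subseteq> ?H" unfolding segment_convex_hull by (rule hull_mono) auto
  finally have plus: "\<beta> *\<^sub>R f + e \<in> ?H" by (simp add: add.commute)
  have "-e + \<beta> *\<^sub>R f \<in> closed_segment (-e + f) (-e - f)"
    using assms(2) by (rule add_scaleR_mem_closed_segment)
  also have "\<dots> \<subseteq> ?H" unfolding segment_convex_hull by (rule hull_mono) auto
  finally have minus: "\<beta> *\<^sub>R f - e \<in> ?H" by (simp add: algebra_simps)
  have "\<beta> *\<^sub>R f + \<alpha> *\<^sub>R e \<in> closed_segment (\<beta> *\<^sub>R f + e) (\<beta> *\<^sub>R f - e)"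
    using assms(1) by (rule add_scaleR_mem_closed_segment)
  also have "\<dots> \<subseteq> ?H" using plus minus by (rule closed_segment_subset_convex_hull)
  finally show ?thesis by (simp add: add.commute)
qed

lemma complex_orthogonal_pair_eq_0:
  fixes v e f :: complex
  assumes "e \<bullet> f = 0" "e \<noteq> 0" "f \<noteq> 0" "v \<bullet> e = 0" "v \<bullet> f = 0"
  shows "v = 0"
proof -
  define D where "D = Re e * Im f - Im e * Re f"
  have "D\<^sup>2 = (e \<bullet> e) * (f \<bullet> f) - (e \<bullet> f)\<^sup>2"
    unfolding D_def inner_complex_def by algebra
  then have "D \<noteq> 0" using assms(1-3) by auto
  moreover have "D * Re v = 0" "D * Im v = 0"
    using assms(4,5) unfolding D_def inner_complex_def by algebra+
  ultimately show ?thesis by (simp add: complex_eq_iff)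
qed

lemma complex_orthogonal_decomposition:
  fixes z e f :: complex
  assumes "e \<bullet> f = 0" "e \<noteq> 0" "f \<noteq> 0"
  shows "z = ((z \<bullet> e) / (e \<bullet> e)) *\<^sub>R e + ((z \<bullet> f) / (f \<bullet> f)) *\<^sub>R f"
proof -
  define v where "v = z - (((z \<bullet> e) / (e \<bullet> e)) *\<^sub>R e + ((z \<bullet> f) / (f \<bullet> f)) *\<^sub>R f)"
  have "v \<bullet> e = 0" "v \<bullet> f = 0"
    using assms by (simp_all add: v_def inner_diff_left inner_add_left inner_commute[of f e])
  then have "v = 0" using assms by (intro complex_orthogonal_pair_eq_0)
  then show ?thesis by (simp add: v_def)
qed

lemma mem_convex_hull_orthogonal_rectangle:
  fixes z e f :: complex
  assumes "e \<bullet> f = 0" "e \<noteq> 0" "f \<noteq> 0" "\<bar>z \<bullet> e\<bar> \<le> e \<bullet> e" "\<bar>z \<bullet> f\<bar> \<le> f \<bullet> f"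
  shows "z \<in> convex hull {e + f, e - f, -(e + f), -(e - f)}"
proof -
  have "\<bar>(z \<bullet> e) / (e \<bullet> e)\<bar> \<le> 1" "\<bar>(z \<bullet> f) / (f \<bullet> f)\<bar> \<le> 1"
    using assms by (simp_all add: abs_divide)
  then show ?thesis
    by (subst complex_orthogonal_decomposition[OF assms(1-3)])
      (rule scaleR_add_mem_convex_hull_rectangle)
qed

lemma mem_closed_segment_orthogonal_rectangle:
  fixes z e f :: complex
  assumes "e \<bullet> f = 0" "e \<noteq> 0" "f \<noteq> 0" "z \<bullet> e = e \<bullet> e" "\<bar>z \<bullet> f\<bar> \<le> f \<bullet> f"
  shows "z \<in> closed_segment (e + f) (e - f)"
proof -
  have "\<bar>(z \<bullet> f) / (f \<bullet> f)\<bar> \<le> 1" using assms by (simp add: abs_divide)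
  then show ?thesis using assms(2,4)
    by (subst complex_orthogonal_decomposition[OF assms(1-3)])
      (simp add: add_scaleR_mem_closed_segment)
qed

(* For s1^2, s2^2 the two roots of w (w - q) = l (1 - conj q w) this is Vieta's relation; for unit
   s1, s2 it says that the chord from s1 to s2 is tangent to poncelet_ellipse q. *)
definition poncelet_chord :: "complex \<Rightarrow> complex \<Rightarrow> complex \<Rightarrow> bool" where
  "poncelet_chord q s1 s2 \<longleftrightarrow> s1\<^sup>2 + s2\<^sup>2 = q + cnj q * s1\<^sup>2 * s2\<^sup>2"

definition poncelet_ellipse :: "complex \<Rightarrow> complex set" where
  "poncelet_ellipse q = focal_ellipse (csqrt q) (sqrt ((1 + cmod q) / 2))"

lemma is_ellipse_poncelet_ellipse: "cmod q < 1 \<Longrightarrow> is_ellipse (poncelet_ellipse q)"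
  unfolding poncelet_ellipse_def by (rule is_ellipse_focal_ellipse) simp

lemma unit_complex_mult_cnj: "cmod z = 1 \<Longrightarrow> z * cnj z = 1"
  using complex_norm_square[of z] by simp

lemma poncelet_chord_Re:
  assumes "cmod s1 = 1" "cmod s2 = 1" "poncelet_chord q s1 s2"
  shows "Re (q * cnj (s1 * s2)) = Re (s1 * cnj s2)"
proof -
  have "q * (c1 * c2) + Q * (s1 * s2) = s1 * c2 + s2 * c1"
    if "s1 * c1 = 1" "s2 * c2 = 1" "s1\<^sup>2 + s2\<^sup>2 = q + Q * s1\<^sup>2 * s2\<^sup>2" for c1 c2 Q
    using that by algebra
  from this[OF unit_complex_mult_cnj[OF assms(1)] unit_complex_mult_cnj[OF assms(2)]]
  have "q * (cnj s1 * cnj s2) + cnj q * (s1 * s2) = s1 * cnj s2 + s2 * cnj s1"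
    using assms(3) unfolding poncelet_chord_def by blast
  moreover have "Re (q * (cnj s1 * cnj s2) + cnj q * (s1 * s2)) = 2 * Re (q * cnj (s1 * s2))"
    "Re (s1 * cnj s2 + s2 * cnj s1) = 2 * Re (s1 * cnj s2)"
    by (simp_all add: algebra_simps)
  ultimately show ?thesis by simp
qed

lemma poncelet_chord_tangent:
  fixes s1 s2 r :: complex
  assumes "cmod s1 = 1" "cmod s2 = 1" "poncelet_chord (r\<^sup>2) s1 s2"
    and "R\<^sup>2 = (1 + (cmod r)\<^sup>2) / 2"
  shows "(R\<^sup>2 - r \<bullet> r) * (((s1 + s2) / 2) \<bullet> ((s1 + s2) / 2)) + (r \<bullet> ((s1 + s2) / 2))\<^sup>2
    = (((s1 + s2) / 2) \<bullet> ((s1 + s2) / 2))\<^sup>2"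
proof -
  have "Re (r\<^sup>2 * cnj (s1 * s2)) = Re (s1 * cnj s2)" using assms(1-3) by (rule poncelet_chord_Re)
  then have chord: "((Re r)\<^sup>2 - (Im r)\<^sup>2) * (Re s1 * Re s2 - Im s1 * Im s2)
      + 2 * Re r * Im r * (Re s1 * Im s2 + Re s2 * Im s1) = Re s1 * Re s2 + Im s1 * Im s2"
    by (simp add: power2_eq_square algebra_simps)
  have "(Re s1)\<^sup>2 + (Im s1)\<^sup>2 = 1" "(Re s2)\<^sup>2 + (Im s2)\<^sup>2 = 1"
    using assms(1,2) by (simp_all flip: cmod_power2)
  then have tangent: "2 * (1 - (Re r)\<^sup>2 - (Im r)\<^sup>2) * ((Re s1 + Re s2)\<^sup>2 + (Im s1 + Im s2)\<^sup>2)
      + 4 * (Re r * (Re s1 + Re s2) + Im r * (Im s1 + Im s2))\<^sup>2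
      = ((Re s1 + Re s2)\<^sup>2 + (Im s1 + Im s2)\<^sup>2)\<^sup>2"
    using chord by algebra
  have R: "R\<^sup>2 = (1 + (Re r)\<^sup>2 + (Im r)\<^sup>2) / 2" using assms(4) by (simp add: cmod_power2)
  show ?thesis unfolding inner_complex_def R using tangent
    by (simp add: power2_eq_square field_simps)
qed

lemma poncelet_ellipse_focal_tangent:
  fixes q s1 s2 :: complex
  defines "r \<equiv> csqrt q" and "R \<equiv> sqrt ((1 + cmod q) / 2)" and "n \<equiv> (s1 + s2) / 2"
  assumes "cmod q < 1" "cmod s1 = 1" "cmod s2 = 1" "poncelet_chord q s1 s2"
  shows "norm r < R" and "(R\<^sup>2 - r \<bullet> r) * (n \<bullet> n) + (r \<bullet> n)\<^sup>2 = (n \<bullet> n)\<^sup>2"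
proof -
  show "norm r < R" using assms(4) by (simp add: r_def R_def)
  have "R\<^sup>2 = (1 + (cmod r)\<^sup>2) / 2" by (simp add: r_def R_def)
  then show "(R\<^sup>2 - r \<bullet> r) * (n \<bullet> n) + (r \<bullet> n)\<^sup>2 = (n \<bullet> n)\<^sup>2"
    unfolding n_def using assms(5-7) by (intro poncelet_chord_tangent) (simp_all add: r_def)
qed

lemma poncelet_ellipse_support_le:
  assumes "cmod q < 1" "cmod s1 = 1" "cmod s2 = 1" "poncelet_chord q s1 s2"
    and "z \<in> poncelet_ellipse q"
  shows "\<bar>z \<bullet> ((s1 + s2) / 2)\<bar> \<le> ((s1 + s2) / 2) \<bullet> ((s1 + s2) / 2)"
proof -
  note tangent = poncelet_ellipse_focal_tangent[OF assms(1-4)]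
  have "(z \<bullet> ((s1 + s2) / 2))\<^sup>2 \<le> (((s1 + s2) / 2) \<bullet> ((s1 + s2) / 2))\<^sup>2"
    using focal_ellipse_support_le[OF tangent(1)] assms(5) tangent(2)
    by (metis poncelet_ellipse_def)
  then show ?thesis by (simp add: abs_le_square_iff[symmetric])
qed

lemma poncelet_ellipse_touches_chord:
  assumes "cmod q < 1" "cmod s1 = 1" "cmod s2 = 1" "s2 \<noteq> -s1" "poncelet_chord q s1 s2"
  obtains z where "z \<in> poncelet_ellipse q" "z \<bullet> ((s1 + s2) / 2) = ((s1 + s2) / 2) \<bullet> ((s1 + s2) / 2)"
proof -
  note tangent = poncelet_ellipse_focal_tangent[OF assms(1-3,5)]
  have "(s1 + s2) / 2 \<noteq> 0" using assms(4) by (auto simp: add_eq_0_iff)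
  from focal_ellipse_touches_line[OF tangent(1) this tangent(2)] show ?thesis
    by (metis that poncelet_ellipse_def)
qed

lemma poncelet_chord_minus_right [simp]: "poncelet_chord q s1 (-s2) \<longleftrightarrow> poncelet_chord q s1 s2"
  by (simp add: poncelet_chord_def)

lemma poncelet_chord_commute: "poncelet_chord q s2 s1 \<longleftrightarrow> poncelet_chord q s1 s2"
  by (auto simp: poncelet_chord_def algebra_simps)

lemma poncelet_ellipse_in_rectangle:
  assumes "cmod q < 1" "cmod s1 = 1" "cmod s2 = 1" "s2 \<noteq> s1" "s2 \<noteq> -s1" "poncelet_chord q s1 s2"
  shows "poncelet_ellipse q \<subseteq> convex hull {s1, s2, -s1, -s2}"
    and "poncelet_ellipse q \<inter> closed_segment s1 s2 \<noteq> {}"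
proof -
  define e f where "e = (s1 + s2) / 2" and "f = (s1 + -s2) / 2"
  have vertices: "e + f = s1" "e - f = s2" by (simp_all add: e_def f_def field_simps)
  have "(s1 + s2) \<bullet> (s1 - s2) = (norm s1)\<^sup>2 - (norm s2)\<^sup>2"
    by (simp add: inner_add_left inner_diff_right inner_commute[of s2 s1] power2_norm_eq_inner)
  then have "e \<bullet> f = 0" using assms(2,3) by (simp add: e_def f_def inner_complex_def field_simps)
  moreover have "e \<noteq> 0" "f \<noteq> 0" using assms(4,5) by (auto simp: e_def f_def add_eq_0_iff)
  moreover have f_bound: "\<bar>z \<bullet> f\<bar> \<le> f \<bullet> f" if "z \<in> poncelet_ellipse q" for z
    unfolding f_def using assms that by (intro poncelet_ellipse_support_le) simp_all
  ultimately show "poncelet_ellipse q \<subseteq> convex hull {s1, s2, -s1, -s2}"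
    using mem_convex_hull_orthogonal_rectangle[of e f] poncelet_ellipse_support_le[OF assms(1-3,6)]
    unfolding vertices e_def[symmetric] by blast
  obtain z where "z \<in> poncelet_ellipse q" "z \<bullet> e = e \<bullet> e"
    using poncelet_ellipse_touches_chord[OF assms(1-3,5,6)] unfolding e_def by blast
  with \<open>e \<bullet> f = 0\<close> \<open>e \<noteq> 0\<close> \<open>f \<noteq> 0\<close> f_bound
  show "poncelet_ellipse q \<inter> closed_segment s1 s2 \<noteq> {}"
    using mem_closed_segment_orthogonal_rectangle[of e f z] unfolding vertices by blast
qed

lemma poncelet_ellipse_inscribed:
  assumes "cmod q < 1" "cmod s1 = 1" "cmod s2 = 1" "s2 \<noteq> s1" "s2 \<noteq> -s1" "poncelet_chord q s1 s2"
    and sides: "\<And>x y. (x, y) \<in> sides \<Longrightarrow>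
      x \<in> {s1, s2, -s1, -s2} \<and> y \<in> {s1, s2, -s1, -s2} \<and> y \<noteq> x \<and> y \<noteq> -x"
  shows "inscribed_in_polygon (poncelet_ellipse q) {s1, s2, -s1, -s2} sides"
proof -
  have "poncelet_ellipse q \<inter> closed_segment x y \<noteq> {}" if "(x, y) \<in> sides" for x y
  proof -
    have "cmod x = 1" "cmod y = 1" "y \<noteq> x" "y \<noteq> -x" using sides[OF that] assms(2,3) by auto
    moreover have "poncelet_chord q x y"
      using sides[OF that] assms(6) by (auto simp: poncelet_chord_commute)
    ultimately show ?thesis by (rule poncelet_ellipse_in_rectangle(2)[OF assms(1)])
  qed
  then show ?thesis using poncelet_ellipse_in_rectangle(1)[OF assms(1-6)]
    unfolding inscribed_in_polygon_def by auto
qed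

definition blaschke_square :: "complex \<Rightarrow> complex \<Rightarrow> complex" where
  "blaschke_square q z = z\<^sup>2 * (z\<^sup>2 - q) / (1 - cnj q * z\<^sup>2)"

lemma blaschke_product_blaschke_square:
  assumes "cmod q < 1"
  shows "blaschke_product 4 (blaschke_square q)"
proof -
  define r where "r = csqrt q"
  define a :: "nat \<Rightarrow> complex" where "a i = (if i = 2 then r else if i = 3 then -r else 0)" for i
  have "(\<Prod>i<4. (z - a i) / (1 - cnj (a i) * z))
      = z * z * ((z - r) / (1 - cnj r * z)) * ((z + r) / (1 + cnj r * z))" for z
    by (simp add: a_def eval_nat_numeral lessThan_Suc algebra_simps)
  also have "\<dots> z = blaschke_square q z" for z
  proof -
    have rr: "q = r * r" "cnj q = cnj r * cnj r"
      by (simp_all add: r_def flip: power2_eq_square complex_cnj_power)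
    have "z * z * ((z - r) / (1 - cnj r * z)) * ((z + r) / (1 + cnj r * z))
        = (z * z * ((z - r) * (z + r))) / ((1 - cnj r * z) * (1 + cnj r * z))"
      by (simp add: times_divide_times_eq mult.assoc)
    then show ?thesis unfolding blaschke_square_def rr
      by (simp add: power2_eq_square algebra_simps)
  qed
  finally have "blaschke_square q = (\<lambda>z. 1 * (\<Prod>i<4. (z - a i) / (1 - cnj (a i) * z)))"
    by simp
  moreover have "\<forall>i<4. cmod (a i) < 1" using assms by (simp add: a_def r_def)
  ultimately show ?thesis unfolding blaschke_product_def by (intro exI[of _ 1] exI[of _ a]) simp
qed

lemma blaschke_square_eq_iff:
  assumes "cmod q < 1" "cmod z = 1"
  shows "blaschke_square q z = l \<longleftrightarrow> z\<^sup>2 * (z\<^sup>2 - q) = l * (1 - cnj q * z\<^sup>2)"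
proof -
  have "cmod (cnj q * z\<^sup>2) < 1" using assms by (simp add: norm_mult norm_power)
  then have "1 - cnj q * z\<^sup>2 \<noteq> 0" by auto
  then show ?thesis unfolding blaschke_square_def by (simp add: divide_eq_eq)
qed

(* |1 - conj q w|^2 - |w - q|^2 = (1 - |w|^2) (1 - |q|^2), so |w| |w - q| = |1 - conj q w|
   forces |w| = 1 when |q| < 1. *)
lemma blaschke2_level_norm:
  assumes "cmod q < 1" "cmod l = 1" "w * (w - q) = l * (1 - cnj q * w)"
  shows "cmod w = 1"
proof -
  define X Y Q where "X = (cmod w)\<^sup>2" and "Y = (cmod (w - q))\<^sup>2" and "Q = (cmod q)\<^sup>2"
  have "(cmod (w * (w - q)))\<^sup>2 = (cmod (1 - cnj q * w))\<^sup>2"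
    using assms(2,3) by (simp add: norm_mult)
  then have XY: "X * Y = (cmod (1 - cnj q * w))\<^sup>2"
    by (simp add: X_def Y_def norm_mult power_mult_distrib)
  have "(cmod (1 - cnj q * w))\<^sup>2 - Y = (1 - X) * (1 - Q)"
    unfolding X_def Y_def Q_def cmod_power2 by (simp add: power2_eq_square algebra_simps)
  with XY have key: "(X - 1) * Y = (1 - X) * (1 - Q)" by (simp add: algebra_simps)
  have "Y \<ge> 0" "X \<ge> 0" "Q < 1"
    using assms(1) by (simp_all add: X_def Y_def Q_def power_less_one_iff)
  with key have "X = 1"
    by (smt (verit) mult_le_0_iff mult_pos_pos zero_le_mult_iff)
  then show ?thesis unfolding X_def using norm_ge_zero[of w] by (simp add: power2_eq_1_iff)
qed

lemma blaschke2_level_set: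
  assumes "cmod q < 1" "cmod l = 1"
  obtains w1 w2 where "cmod w1 = 1" "cmod w2 = 1" "w1 \<noteq> w2" "w1 + w2 = q + cnj q * w1 * w2"
    and "\<And>w. w * (w - q) = l * (1 - cnj q * w) \<longleftrightarrow> w = w1 \<or> w = w2"
proof -
  define p where "p = q - l * cnj q"
  define \<delta> where "\<delta> = csqrt (p\<^sup>2 + 4 * l)"
  define w1 w2 where "w1 = (p + \<delta>) / 2" and "w2 = (p - \<delta>) / 2"
  have factor: "w * (w - q) - l * (1 - cnj q * w) = (w - w1) * (w - w2)" for w
  proof -
    have "\<delta>\<^sup>2 = p\<^sup>2 + 4 * l" by (simp add: \<delta>_def)
    then show ?thesis unfolding w1_def w2_def p_def by (simp add: field_simps) algebra
  qed
  then have roots: "w * (w - q) = l * (1 - cnj q * w) \<longleftrightarrow> w = w1 \<or> w = w2" for w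
    by (metis eq_iff_diff_eq_0 mult_eq_0_iff)
  then have unit: "cmod w1 = 1" "cmod w2 = 1" using blaschke2_level_norm[OF assms] by blast+
  have sum: "w1 + w2 = q - l * cnj q" and prod: "w1 * w2 = -l"
    using factor[of 0] by (simp_all add: w1_def w2_def p_def field_simps)
  then have vieta: "w1 + w2 = q + cnj q * w1 * w2" by (simp add: mult.assoc)
  have "w1 \<noteq> w2"
  proof
    assume "w1 = w2"
    then have "2 * w1 * cnj w1 = (q + cnj q * w1 * w1) * cnj w1" using vieta by simp
    then have "2 = q * cnj w1 + cnj q * w1"
      using unit_complex_mult_cnj[OF unit(1)] by algebra
    then have "2 = q * cnj w1 + cnj (q * cnj w1)" by simp
    then have "Re 2 = Re (q * cnj w1 + cnj (q * cnj w1))" by (rule arg_cong)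
    then have "Re (q * cnj w1) = 1" by simp
    moreover have "Re (q * cnj w1) \<le> cmod q"
      using complex_Re_le_cmod[of "q * cnj w1"] unit(1) by (simp add: norm_mult)
    ultimately show False using assms(1) by simp
  qed
  with unit vieta roots that show ?thesis by blast
qed

lemma blaschke_square_level_set:
  assumes "cmod q < 1" "cmod l = 1"
  obtains s1 s2 where "cmod s1 = 1" "cmod s2 = 1" "s2 \<noteq> s1" "s2 \<noteq> -s1" "poncelet_chord q s1 s2"
    and "{z. cmod z = 1 \<and> blaschke_square q z = l} = {s1, s2, -s1, -s2}"
proof -
  obtain w1 w2 where unit: "cmod w1 = 1" "cmod w2 = 1" and "w1 \<noteq> w2"
    and vieta: "w1 + w2 = q + cnj q * w1 * w2"
    and roots: "\<And>w. w * (w - q) = l * (1 - cnj q * w) \<longleftrightarrow> w = w1 \<or> w = w2"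
    using blaschke2_level_set[OF assms] by blast
  define s1 s2 where "s1 = csqrt w1" and "s2 = csqrt w2"
  have sq: "s1\<^sup>2 = w1" "s2\<^sup>2 = w2" by (simp_all add: s1_def s2_def)
  have "cmod s1 = 1" "cmod s2 = 1" using unit by (simp_all add: s1_def s2_def)
  moreover have "s2 \<noteq> s1" "s2 \<noteq> -s1" using \<open>w1 \<noteq> w2\<close> sq by auto
  moreover have "poncelet_chord q s1 s2" using vieta by (simp add: poncelet_chord_def sq)
  moreover have "{z. cmod z = 1 \<and> blaschke_square q z = l} = {s1, s2, -s1, -s2}"
  proof -
    have "z \<in> {s1, s2, -s1, -s2} \<longleftrightarrow> z\<^sup>2 = w1 \<or> z\<^sup>2 = w2" for z
      unfolding sq[symmetric] power2_eq_iff by blast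
    moreover have "cmod z = 1" if "z\<^sup>2 = w1 \<or> z\<^sup>2 = w2" for z
    proof -
      have "(cmod z)\<^sup>2 = 1" using that unit by (auto simp: norm_power[symmetric])
      then show ?thesis using norm_ge_zero[of z] by (auto simp: power2_eq_1_iff)
    qed
    moreover have "cmod z = 1 \<and> blaschke_square q z = l \<longleftrightarrow> cmod z = 1 \<and> (z\<^sup>2 = w1 \<or> z\<^sup>2 = w2)" for z
      using blaschke_square_eq_iff[OF assms(1), of z l] roots[of "z\<^sup>2"]
      by (auto simp: power2_eq_square)
    ultimately show ?thesis by blast
  qed
  ultimately show ?thesis using that by blast
qed

lemma consecutive_on_circle_not_antipodal:
  assumes "consecutive_on_circle S z w" "cmod z = 1"
    and "y \<in> S" "-y \<in> S" "cmod y = 1" "y \<noteq> z" "y \<noteq> -z"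
  shows "w \<noteq> -z"
proof
  assume "w = -z"
  from assms(1) obtain t where t: "0 < t" "t < 2 * pi" "w = z * cis t"
    and gap: "\<And>u. 0 < u \<Longrightarrow> u < t \<Longrightarrow> z * cis u \<notin> S"
    unfolding consecutive_on_circle_def by blast
  have "z \<noteq> 0" using assms(2) by auto
  then have "cis t = -1" using t(3) \<open>w = -z\<close> by (metis mult_cancel_left mult_minus1_right)
  then have "cos t = -1" by (metis cis.sel(1) one_complex.sel(1) uminus_complex.sel(1))
  then obtain n :: int where n: "t = (2 * n + 1) * pi" by (auto simp: cos_eq_minus1)
  with t(1,2) have "0 < real_of_int (2 * n + 1)" "real_of_int (2 * n + 1) < 2"
    by (simp_all add: zero_less_mult_iff mult_less_cancel_right_pos)
  then have "t = pi" using n by simp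
  define v where "v = Arg (y / z)"
  have "y / z \<noteq> 0" "cmod (y / z) = 1" using assms(2,5) by (auto simp: norm_divide)
  then have "z * cis v = y" using cis_Arg[of "y / z"] \<open>z \<noteq> 0\<close> by (simp add: v_def sgn_div_norm)
  moreover have "-pi < v" "v \<le> pi" using Arg_bounded[of "y / z"] by (auto simp: v_def)
  moreover have "v \<noteq> 0" "v \<noteq> pi"
    using \<open>z * cis v = y\<close> assms(6,7) by auto
  moreover have "z * cis (v + pi) = -y"
    using \<open>z * cis v = y\<close> by (simp add: cis_mult[symmetric] algebra_simps)
  ultimately show False using gap[of v] gap[of "v + pi"] assms(3,4) \<open>t = pi\<close>
    by (cases "v > 0") auto
qed

lemma poncelet_curve_blaschke_square:
  assumes "cmod q < 1"
  shows "poncelet_curve (blaschke_square q) (poncelet_ellipse q)"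
  unfolding poncelet_curve_def Let_def
proof (intro allI impI)
  fix l :: complex
  assume "cmod l = 1"
  then obtain s1 s2
    where s: "cmod s1 = 1" "cmod s2 = 1" "s2 \<noteq> s1" "s2 \<noteq> -s1" "poncelet_chord q s1 s2"
    and level: "{z. cmod z = 1 \<and> blaschke_square q z = l} = {s1, s2, -s1, -s2}"
    using blaschke_square_level_set[OF assms] by blast
  have antipodal: "y \<noteq> -x" if c: "consecutive_on_circle {s1, s2, -s1, -s2} x y" for x y
  proof -
    have "x \<in> {s1, s2, -s1, -s2}" using c by (simp add: consecutive_on_circle_def)
    then consider "x = s1 \<or> x = -s1" | "x = s2 \<or> x = -s2" by blast
    then show ?thesis
    proof cases
      case 1
      then show ?thesis using s by (intro consecutive_on_circle_not_antipodal[OF c, of s2]) auto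
    next
      case 2
      then show ?thesis using s by (intro consecutive_on_circle_not_antipodal[OF c, of s1]) auto
    qed
  qed
  have "x \<in> {s1, s2, -s1, -s2} \<and> y \<in> {s1, s2, -s1, -s2} \<and> y \<noteq> x \<and> y \<noteq> -x"
    if "(x, y) \<in> {(z, w). consecutive_on_circle {s1, s2, -s1, -s2} z w}" for x y
  proof -
    have c: "consecutive_on_circle {s1, s2, -s1, -s2} x y" using that by simp
    then show ?thesis using antipodal[OF c] by (auto simp: consecutive_on_circle_def)
  qed
  then show "inscribed_in_polygon (poncelet_ellipse q) {z. cmod z = 1 \<and> blaschke_square q z = l}
      {(z, w). consecutive_on_circle {z. cmod z = 1 \<and> blaschke_square q z = l} z w}"
    unfolding level by (rule poncelet_ellipse_inscribed[OF assms s])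
qed

lemma rectangle_on_unit_circle:
  assumes "is_rectangle a b c d" "cmod a = 1" "cmod b = 1" "cmod c = 1"
  shows "c = -a" and "d = -b"
proof -
  have rect: "a \<noteq> b" "b \<noteq> c" "b - a = c - d" "Re ((b - a) * cnj (c - b)) = 0"
    using assms(1) unfolding is_rectangle_def by blast+
  have orth: "(b - a) \<bullet> (c - b) = 0" using rect(4) by (simp add: inner_complex_def algebra_simps)
  have unit: "a \<bullet> a = 1" "b \<bullet> b = 1" "c \<bullet> c = 1"
    using assms(2-4) by (simp_all flip: power2_norm_eq_inner)
  have "(a + c) \<bullet> (b - a) = 0" "(a + c) \<bullet> (c - b) = 0"
    using orth unit
    by (simp_all add: inner_add_left inner_diff_left inner_diff_right inner_commute algebra_simps)
  with rect(1,2) orth have "a + c = 0"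
    by (intro complex_orthogonal_pair_eq_0[of "b - a" "c - b"]) auto
  then show "c = -a" by (simp add: add_eq_0_iff2)
  with rect(3) show "d = -b" by (simp add: algebra_simps add_eq_0_iff2)
qed

lemma poncelet_chord_unit_pair:
  assumes "cmod a = 1" "cmod b = 1"
  shows "poncelet_chord ((a\<^sup>2 + b\<^sup>2) / 2) a b"
proof -
  have "a\<^sup>2 + b\<^sup>2 = (a\<^sup>2 + b\<^sup>2) / 2 + (ca\<^sup>2 + cb\<^sup>2) / 2 * a\<^sup>2 * b\<^sup>2"
    if "a * ca = 1" "b * cb = 1" for ca cb
    using that by algebra
  from this[OF unit_complex_mult_cnj[OF assms(1)] unit_complex_mult_cnj[OF assms(2)]]
  show ?thesis by (simp add: poncelet_chord_def)
qed

lemma norm_half_sum_squares_less: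
  assumes "cmod a = 1" "cmod b = 1" "b \<noteq> a" "b \<noteq> -a"
  shows "cmod ((a\<^sup>2 + b\<^sup>2) / 2) < 1"
proof -
  have "a\<^sup>2 \<noteq> b\<^sup>2" using assms(3,4) by (auto simp: power2_eq_iff)
  then have "cmod (a\<^sup>2 + b\<^sup>2) \<noteq> cmod (a\<^sup>2) + cmod (b\<^sup>2)"
    using assms(1,2) norm_triangle_eq[of "a\<^sup>2" "b\<^sup>2"] by (auto simp: norm_power)
  moreover have "cmod (a\<^sup>2 + b\<^sup>2) \<le> cmod (a\<^sup>2) + cmod (b\<^sup>2)" by (rule norm_triangle_ineq)
  ultimately show ?thesis using assms(1,2) by (simp add: norm_power)
qed

theorem theorem6:
  fixes a b c d :: complex
  assumes "golden_rectangle a b c d"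
    and "cmod a = 1" and "cmod b = 1" and "cmod c = 1" and "cmod d = 1"
  shows "\<exists>E B. is_ellipse E \<and>
           inscribed_in_polygon E {a, b, c, d} {(a, b), (b, c), (c, d), (d, a)} \<and>
           blaschke_product 4 B \<and> B 0 = 0 \<and> poncelet_curve B E"
proof -
  have rect: "is_rectangle a b c d" using assms(1) by (simp add: golden_rectangle_def)
  then have cd: "c = -a" "d = -b" using assms(2-4) by (rule rectangle_on_unit_circle)+
  with rect have ab: "b \<noteq> a" "b \<noteq> -a" by (auto simp: is_rectangle_def)
  define q where "q = (a\<^sup>2 + b\<^sup>2) / 2"
  have q: "cmod q < 1" unfolding q_def using assms(2,3) ab by (rule norm_half_sum_squares_less)
  have "inscribed_in_polygon (poncelet_ellipse q)
      {a, b, -a, -b} {(a, b), (b, -a), (-a, -b), (-b, a)}"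
    using q assms(2,3) ab poncelet_chord_unit_pair[OF assms(2,3)]
    by (intro poncelet_ellipse_inscribed) (auto simp: q_def)
  moreover have "is_ellipse (poncelet_ellipse q)"
    using q by (rule is_ellipse_poncelet_ellipse)
  moreover have "blaschke_square q 0 = 0" by (simp add: blaschke_square_def)
  ultimately show ?thesis unfolding cd
    using blaschke_product_blaschke_square[OF q] poncelet_curve_blaschke_square[OF q] by blast
qed

end
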